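(* Let $H_0, H_1^{(1)},\dots,H_1^{(m)}$ be Hermitian $d\times d$ matrices, $H(v)=H_0+\sum_{k=1}^m v_kH_1^{(k)}$, $E_0(v)$ its smallest eigenvalue, and $\mathcal{F}[\rho]=\sup_{v\in\mathbb{R}^m}\{E_0(v)-\sum_k v_k\rho_k\}$. Assume $E_0$ is strictly concave on $\mathbb{R}^m$ and that the smallest eigenvalue of $H(v)$ is non-degenerate for every $v\in\mathbb{R}^m$. Let $D$ be the interior of $\{\rho:\mathcal{F}[\rho]<\infty\}$ and, for $\rho\in D$, let $f(\rho)$ be the unique $v$ attaining the supremum in $\mathcal{F}[\rho]$. Then the map $D\ni\rho\mapsto P_0(\rho)$, where $P_0(\rho)$ is the orthogonal projector onto the ground-state eigenspace of $H(f(\rho))$, is continuous; i.e. the ground-state wave function depends continuously (up to phase) on the generalized density.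
   Context: This is the finite-dimensional setting in which $\rho_k=\langle\Psi_0|H_1^{(k)}|\Psi_0\rangle$ is the generalized density (e.g. a one-particle reduced density matrix) associated with the ground state $\Psi_0$ of $H(v)$. *)

theory Defs
  imports "HOL-Analysis.Analysis"
begin

text \<open>Complex d x d matrices are represented as complex^'d^'d (d = CARD('d)).\<close>

definition hermitian :: "complex^'d^'d \<Rightarrow> bool" where
  "hermitian A \<longleftrightarrow> (\<forall>i j. A $ i $ j = cnj (A $ j $ i))"

definition is_eigenvalue :: "complex^'d^'d \<Rightarrow> complex \<Rightarrow> bool" where
  "is_eigenvalue A ev \<longleftrightarrow> (\<exists>x. x \<noteq> 0 \<and> A *v x = ev *s x)"

definition eigenspace :: "complex^'d^'d \<Rightarrow> complex \<Rightarrow> (complex^'d) set" where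
  "eigenspace A ev = {x. A *v x = ev *s x}"

text \<open>Smallest eigenvalue of a (Hermitian) matrix: all its eigenvalues are real.\<close>
definition smallest_eigenvalue :: "complex^'d^'d \<Rightarrow> real" where
  "smallest_eigenvalue A = Min {e::real. is_eigenvalue A (complex_of_real e)}"

definition nondegenerate_eigenvalue :: "complex^'d^'d \<Rightarrow> complex \<Rightarrow> bool" where
  "nondegenerate_eigenvalue A ev \<longleftrightarrow>
     (\<exists>x. x \<noteq> 0 \<and> eigenspace A ev = range (\<lambda>c. c *s x))"

definition is_orth_projector_onto :: "complex^'d^'d \<Rightarrow> (complex^'d) set \<Rightarrow> bool" where
  "is_orth_projector_onto P S \<longleftrightarrow> P ** P = P \<and> hermitian P \<and> range (\<lambda>x. P *v x) = S"

definition orth_projector :: "(complex^'d) set \<Rightarrow> complex^'d^'d" where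
  "orth_projector S = (THE P. is_orth_projector_onto P S)"

definition Ham :: "complex^'d^'d \<Rightarrow> ('m \<Rightarrow> complex^'d^'d) \<Rightarrow> real^'m \<Rightarrow> complex^'d^'d" where
  "Ham H0 H1 v = H0 + (\<Sum>k\<in>UNIV. v $ k *\<^sub>R H1 k)"

definition E0 :: "complex^'d^'d \<Rightarrow> ('m::finite \<Rightarrow> complex^'d^'d) \<Rightarrow> real^'m \<Rightarrow> real" where
  "E0 H0 H1 v = smallest_eigenvalue (Ham H0 H1 v)"

definition Ffun :: "complex^'d^'d \<Rightarrow> ('m::finite \<Rightarrow> complex^'d^'d) \<Rightarrow> real^'m \<Rightarrow> ereal" where
  "Ffun H0 H1 \<rho> = (SUP v\<in>UNIV. ereal (E0 H0 H1 v - v \<bullet> \<rho>))"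

definition Fdom :: "complex^'d^'d \<Rightarrow> ('m::finite \<Rightarrow> complex^'d^'d) \<Rightarrow> (real^'m) set" where
  "Fdom H0 H1 = interior {\<rho>. Ffun H0 H1 \<rho> < \<infinity>}"

definition fpot :: "complex^'d^'d \<Rightarrow> ('m::finite \<Rightarrow> complex^'d^'d) \<Rightarrow> real^'m \<Rightarrow> real^'m" where
  "fpot H0 H1 \<rho> = (THE v. \<forall>w. E0 H0 H1 w - w \<bullet> \<rho> \<le> E0 H0 H1 v - v \<bullet> \<rho>)"

definition strictly_concave_on :: "'a::real_vector set \<Rightarrow> ('a \<Rightarrow> real) \<Rightarrow> bool" where
  "strictly_concave_on S f \<longleftrightarrow> convex S \<and>
     (\<forall>x\<in>S. \<forall>y\<in>S. x \<noteq> y \<longrightarrow> (\<forall>u. 0 < u \<and> u < 1 \<longrightarrow>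
        f ((1 - u) *\<^sub>R x + u *\<^sub>R y) > (1 - u) * f x + u * f y))"

definition P0 :: "complex^'d^'d \<Rightarrow> ('m::finite \<Rightarrow> complex^'d^'d) \<Rightarrow> real^'m \<Rightarrow> complex^'d^'d" where
  "P0 H0 H1 \<rho> = orth_projector (eigenspace (Ham H0 H1 (fpot H0 H1 \<rho>))
                   (complex_of_real (E0 H0 H1 (fpot H0 H1 \<rho>))))"

end

theory Submission
  imports Defs
begin

text \<open>The map factors as \<open>\<rho> \<mapsto> f(\<rho>) \<mapsto> P\<^sub>0\<close>, and both factors are continuous because they
  (locally) take values in a compact set and have closed graphs. For \<open>f\<close>: near an interior point \<open>\<rho>\<^sub>0\<close>
  of the domain, \<open>E\<^sub>0(v) - v \<bullet> \<rho>\<close> decays linearly in \<open>|v|\<close> uniformly in \<open>\<rho>\<close>, so the maximisers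
  stay in a fixed ball, and by strict concavity they are unique, so the graph of \<open>f\<close> is the
  closed set of pairs \<open>(\<rho>, v)\<close> where \<open>v\<close> is a maximiser. For the projector: onto a line
  spanned by \<open>x\<close> it is \<open>x x\<^sup>* / |x|\<^sup>2\<close>, which has Hilbert-Schmidt norm 1 and is the unique
  idempotent Hermitian trace-one matrix with range in that line; the non-degenerate ground
  state eigenspace is such a line, and these conditions are closed in \<open>(v, P)\<close>.\<close>

lemma continuous_on_closed_graph_in_compact:
  fixes f :: "'a::euclidean_space \<Rightarrow> 'b::euclidean_space"
  assumes "compact K" and "f ` S \<subseteq> K" and "closed G"
    and "\<And>x y. x \<in> S \<Longrightarrow> y \<in> K \<Longrightarrow> (x, y) \<in> G \<longleftrightarrow> y = f x"
  shows "continuous_on S f"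
proof -
  have "(\<lambda>x. (x, f x)) ` S = (S \<times> K) \<inter> G"
    using assms(2,4) by auto
  then have "closedin (top_of_set (S \<times> K)) ((\<lambda>x. (x, f x)) ` S)"
    using closedin_closed_Int[OF \<open>closed G\<close>] by metis
  then show ?thesis
    using continuous_closed_graph_eq[OF \<open>compact K\<close>] assms(2) by blast
qed

definition conj_transpose :: "complex^'n^'m \<Rightarrow> complex^'m^'n" where
  "conj_transpose A = (\<chi> i j. cnj (A $ j $ i))"

lemma hermitian_iff_conj_transpose: "hermitian A \<longleftrightarrow> conj_transpose A = A"
  unfolding hermitian_def conj_transpose_def vec_eq_iff by (simp only: vec_lambda_beta) metis

lemma conj_transpose_mult: "conj_transpose (A ** B) = conj_transpose B ** conj_transpose A"
  unfolding conj_transpose_def matrix_matrix_mult_def vec_eq_iff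
  by (simp add: mult.commute)

lemma is_orth_projector_onto_mult:
  assumes "is_orth_projector_onto P S" "is_orth_projector_onto Q S"
  shows "P ** Q = Q"
proof -
  have "(P ** Q) *v y = Q *v y" for y
  proof -
    obtain z where z: "Q *v y = P *v z"
      using assms unfolding is_orth_projector_onto_def by (metis rangeE rangeI)
    have "(P ** Q) *v y = (P ** P) *v z"
      by (simp add: z flip: matrix_vector_mul_assoc)
    then show ?thesis
      using assms(1) z unfolding is_orth_projector_onto_def by simp
  qed
  then show ?thesis
    by (rule matrix_eq[THEN iffD2, rule_format])
qed

lemma is_orth_projector_onto_unique:
  assumes P: "is_orth_projector_onto P S" and Q: "is_orth_projector_onto Q S"
  shows "P = Q"
proof -
  have "conj_transpose P = P" "conj_transpose Q = Q"
    using P Q unfolding is_orth_projector_onto_def hermitian_iff_conj_transpose by auto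
  then have "P = conj_transpose (Q ** P)"
    using is_orth_projector_onto_mult[OF Q P] by simp
  also have "\<dots> = P ** Q"
    by (simp add: conj_transpose_mult \<open>conj_transpose P = P\<close> \<open>conj_transpose Q = Q\<close>)
  also have "\<dots> = Q"
    using is_orth_projector_onto_mult[OF P Q] .
  finally show ?thesis .
qed

lemma orth_projector_eqI: "is_orth_projector_onto P S \<Longrightarrow> orth_projector S = P"
  unfolding orth_projector_def by (blast intro: is_orth_projector_onto_unique)

lemma power2_norm_vec: "(norm (x :: 'a::real_inner^'n))\<^sup>2 = (\<Sum>i\<in>UNIV. (norm (x $ i))\<^sup>2)"
  by (simp add: power2_norm_eq_inner inner_vec_def)

lemma sum_mult_cnj_self: "(\<Sum>j\<in>UNIV. x $ j * cnj (x $ j)) = (complex_of_real (norm x))\<^sup>2"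
  by (simp add: power2_norm_vec complex_norm_square flip: of_real_power)

definition line_projector :: "complex^'d \<Rightarrow> complex^'d^'d" where
  "line_projector x = (\<chi> i j. x $ i * cnj (x $ j) / complex_of_real ((norm x)\<^sup>2))"

lemma line_projector_mult_vec:
  "line_projector x *v y = ((\<Sum>j\<in>UNIV. cnj (x $ j) * y $ j) / complex_of_real ((norm x)\<^sup>2)) *s x"
  unfolding line_projector_def matrix_vector_mult_def vec_eq_iff
  by (auto simp: sum_distrib_right sum_divide_distrib intro!: sum.cong)

lemma line_projector_fixes_line:
  assumes "x \<noteq> 0" shows "line_projector x *v (c *s x) = c *s x"
proof -
  have "(\<Sum>j\<in>UNIV. cnj (x $ j) * (c *s x) $ j) = c * (complex_of_real (norm x))\<^sup>2"
    by (simp add: sum_distrib_left mult_ac flip: sum_mult_cnj_self)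
  then show ?thesis
    using assms by (simp add: line_projector_mult_vec)
qed

lemma range_line_projector:
  assumes "x \<noteq> 0" shows "range (\<lambda>y. line_projector x *v y) = range (\<lambda>c. c *s x)"
proof
  show "range (\<lambda>y. line_projector x *v y) \<subseteq> range (\<lambda>c. c *s x)"
    by (auto simp: line_projector_mult_vec)
  show "range (\<lambda>c. c *s x) \<subseteq> range (\<lambda>y. line_projector x *v y)"
  proof clarify
    fix c
    show "c *s x \<in> range (\<lambda>y. line_projector x *v y)"
      using line_projector_fixes_line[OF assms, of c] by (intro range_eqI[where x = "c *s x"]) simp
  qed
qed

lemma line_projector_idem:
  assumes "x \<noteq> 0" shows "line_projector x ** line_projector x = line_projector x"
proof (rule matrix_eq[THEN iffD2, rule_format])
  fix y
  obtain c where "line_projector x *v y = c *s x"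
    using line_projector_mult_vec by blast
  then show "(line_projector x ** line_projector x) *v y = line_projector x *v y"
    by (simp add: line_projector_fixes_line[OF assms] flip: matrix_vector_mul_assoc)
qed

lemma hermitian_line_projector: "hermitian (line_projector x)"
  unfolding hermitian_def line_projector_def by (simp add: mult.commute)

lemma trace_line_projector:
  assumes "x \<noteq> 0" shows "trace (line_projector x) = 1"
  using assms unfolding trace_def line_projector_def
  by (simp add: sum_divide_distrib[symmetric] sum_mult_cnj_self)

lemma norm_line_projector:
  assumes "x \<noteq> 0" shows "norm (line_projector x) = 1"
proof -
  have entry: "norm (line_projector x $ i $ j) = norm (x $ i) * norm (x $ j) / (norm x)\<^sup>2" for i j
    by (simp add: line_projector_def norm_mult norm_divide norm_power)
  have square_quotient: "(a * b / c)\<^sup>2 = (a\<^sup>2 / c) * (b\<^sup>2 / c)" for a b c :: real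
    by (simp add: power2_eq_square)
  have "(norm (line_projector x))\<^sup>2
      = (\<Sum>i\<in>UNIV. \<Sum>j\<in>UNIV. ((norm (x $ i))\<^sup>2 / (norm x)\<^sup>2) * ((norm (x $ j))\<^sup>2 / (norm x)\<^sup>2))"
    unfolding power2_norm_vec[of "line_projector x"] power2_norm_vec[of "line_projector x $ _"] entry
      square_quotient
    ..
  also have "\<dots> = (\<Sum>i\<in>UNIV. (norm (x $ i))\<^sup>2 / (norm x)\<^sup>2) * (\<Sum>j\<in>UNIV. (norm (x $ j))\<^sup>2 / (norm x)\<^sup>2)"
    by (rule sum_product[symmetric])
  also have "\<dots> = 1"
    using assms by (simp add: power2_norm_vec[symmetric] flip: sum_divide_distrib)
  finally have "(norm (line_projector x))\<^sup>2 = 1" .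
  then show ?thesis
    using norm_ge_zero[of "line_projector x"] by (auto simp: power2_eq_1_iff)
qed

lemma is_orth_projector_onto_line:
  assumes "x \<noteq> 0"
  shows "is_orth_projector_onto (line_projector x) (range (\<lambda>c. c *s x))"
  unfolding is_orth_projector_onto_def
  using line_projector_idem[OF assms] hermitian_line_projector range_line_projector[OF assms] by blast

lemma eq_line_projector_iff:
  assumes "x \<noteq> 0"
  shows "P = line_projector x \<longleftrightarrow>
    P ** P = P \<and> hermitian P \<and> range (\<lambda>y. P *v y) \<subseteq> range (\<lambda>c. c *s x) \<and> trace P = 1"
proof
  assume "P = line_projector x"
  then show "P ** P = P \<and> hermitian P \<and> range (\<lambda>y. P *v y) \<subseteq> range (\<lambda>c. c *s x) \<and> trace P = 1"
    using line_projector_idem[OF assms] hermitian_line_projector range_line_projector[OF assms]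
      trace_line_projector[OF assms] by simp
next
  assume P: "P ** P = P \<and> hermitian P \<and> range (\<lambda>y. P *v y) \<subseteq> range (\<lambda>c. c *s x) \<and> trace P = 1"
  have "P \<noteq> 0"
    using P by (auto simp: trace_def)
  then obtain y where "P *v y \<noteq> 0"
    using matrix_eq[of P 0] by auto
  moreover obtain c where c: "P *v y = c *s x"
    using P by blast
  ultimately have "c \<noteq> 0"
    by auto
  have "d *s x = P *v ((d / c) *s y)" for d
    using \<open>c \<noteq> 0\<close> by (simp add: vector_scalar_commute c)
  then have "range (\<lambda>y. P *v y) = range (\<lambda>c. c *s x)"
    using P by blast
  then have "is_orth_projector_onto P (range (\<lambda>c. c *s x))"
    using P unfolding is_orth_projector_onto_def by blast
  then show "P = line_projector x"
    using is_orth_projector_onto_line[OF assms] by (rule is_orth_projector_onto_unique)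
qed

lemma continuous_on_eigenprojector:
  fixes A :: "'a::euclidean_space \<Rightarrow> complex^'d^'d" and e :: "'a \<Rightarrow> complex"
  assumes "continuous_on UNIV A" and "continuous_on UNIV e"
    and nondeg: "\<And>v. nondegenerate_eigenvalue (A v) (e v)"
  shows "continuous_on UNIV (\<lambda>v. orth_projector (eigenspace (A v) (e v)))"
proof (rule continuous_on_closed_graph_in_compact)
  define G where "G = {(v, P). P ** P = P \<and> hermitian P \<and>
    (\<forall>y. A v *v (P *v y) = e v *s (P *v y)) \<and> trace P = 1}"
  have eigenline: "\<exists>x. x \<noteq> 0 \<and> eigenspace (A v) (e v) = range (\<lambda>c. c *s x) \<and>
      orth_projector (eigenspace (A v) (e v)) = line_projector x" for v
    using nondeg[of v] orth_projector_eqI[OF is_orth_projector_onto_line]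
    unfolding nondegenerate_eigenvalue_def by metis
  show "(\<lambda>v. orth_projector (eigenspace (A v) (e v))) ` UNIV \<subseteq> cball 0 1"
  proof (rule image_subsetI)
    fix v
    obtain x where "x \<noteq> 0" "orth_projector (eigenspace (A v) (e v)) = line_projector x"
      using eigenline by blast
    then show "orth_projector (eigenspace (A v) (e v)) \<in> cball 0 1"
      using norm_line_projector[of x] by simp
  qed
  have "continuous_on UNIV (\<lambda>z :: 'a \<times> (complex^'d^'d). A (fst z))"
    by (rule continuous_on_compose2[OF assms(1) continuous_on_fst]) auto
  moreover have "continuous_on UNIV (\<lambda>z :: 'a \<times> (complex^'d^'d). e (fst z))"
    by (rule continuous_on_compose2[OF assms(2) continuous_on_fst]) auto
  ultimately show "closed G"
    unfolding G_def case_prod_beta' hermitian_def matrix_matrix_mult_def matrix_vector_mult_def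
      vector_scalar_mult_def trace_def
    by (intro closed_Collect_conj closed_Collect_all closed_Collect_eq continuous_intros)
  fix v and P :: "complex^'d^'d"
  obtain x where x: "x \<noteq> 0" "eigenspace (A v) (e v) = range (\<lambda>c. c *s x)"
    "orth_projector (eigenspace (A v) (e v)) = line_projector x"
    using eigenline by blast
  have "(\<forall>y. A v *v (P *v y) = e v *s (P *v y)) \<longleftrightarrow> range (\<lambda>y. P *v y) \<subseteq> range (\<lambda>c. c *s x)"
    using x(2) unfolding eigenspace_def by blast
  then show "(v, P) \<in> G \<longleftrightarrow> P = orth_projector (eigenspace (A v) (e v))"
    unfolding G_def x(3) eq_line_projector_iff[OF x(1)] by simp
qed (rule compact_cball)

lemma strictly_concave_on_imp_concave_on:
  assumes "strictly_concave_on S f"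
  shows "concave_on S f"
  unfolding concave_on_def
proof (rule convex_onI)
  fix t :: real and x y
  assume t: "0 < t" "t < 1" and "x \<in> S" "y \<in> S"
  show "- f ((1 - t) *\<^sub>R x + t *\<^sub>R y) \<le> (1 - t) * - f x + t * - f y"
  proof (cases "x = y")
    case True
    then show ?thesis
      by (simp add: algebra_simps flip: scaleR_left_distrib)
  next
    case False
    then have "(1 - t) * f x + t * f y < f ((1 - t) *\<^sub>R x + t *\<^sub>R y)"
      using assms t \<open>x \<in> S\<close> \<open>y \<in> S\<close> unfolding strictly_concave_on_def by blast
    then show ?thesis
      by simp
  qed
qed (use assms in \<open>simp add: strictly_concave_on_def\<close>)

lemma strictly_concave_on_imp_continuous_on:
  fixes f :: "'a::euclidean_space \<Rightarrow> real"
  assumes "open S" and "strictly_concave_on S f"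
  shows "continuous_on S f"
proof -
  have "continuous_on S (\<lambda>x. - f x)"
    using convex_on_continuous[OF \<open>open S\<close>] strictly_concave_on_imp_concave_on[OF assms(2)]
    unfolding concave_on_def by blast
  then show ?thesis
    using continuous_on_minus by fastforce
qed

lemma strictly_concave_on_diff_inner:
  assumes "strictly_concave_on S f"
  shows "strictly_concave_on S (\<lambda>v. f v - v \<bullet> \<rho>)"
  unfolding strictly_concave_on_def
proof (intro conjI ballI impI allI)
  show "convex S"
    using assms unfolding strictly_concave_on_def by blast
  fix x y and u :: real
  assume "x \<in> S" "y \<in> S" "x \<noteq> y" "0 < u \<and> u < 1"
  then have "(1 - u) * f x + u * f y < f ((1 - u) *\<^sub>R x + u *\<^sub>R y)"
    using assms unfolding strictly_concave_on_def by blast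
  then show "(1 - u) * (f x - x \<bullet> \<rho>) + u * (f y - y \<bullet> \<rho>)
      < f ((1 - u) *\<^sub>R x + u *\<^sub>R y) - ((1 - u) *\<^sub>R x + u *\<^sub>R y) \<bullet> \<rho>"
    by (simp add: inner_add_left algebra_simps)
qed

lemma strictly_concave_on_maximizer_unique:
  assumes f: "strictly_concave_on S f" and "x \<in> S" "y \<in> S"
    and max_x: "\<And>w. w \<in> S \<Longrightarrow> f w \<le> f x" and max_y: "\<And>w. w \<in> S \<Longrightarrow> f w \<le> f y"
  shows "x = y"
proof (rule ccontr)
  assume "x \<noteq> y"
  define m where "m = (1 - 1/2) *\<^sub>R x + (1/2 :: real) *\<^sub>R y"
  have "m \<in> S"
    using f \<open>x \<in> S\<close> \<open>y \<in> S\<close> unfolding strictly_concave_on_def m_def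
    by (intro convexD) auto
  have "f ((1 - u) *\<^sub>R x + u *\<^sub>R y) > (1 - u) * f x + u * f y" if "0 < u" "u < 1" for u
    using f \<open>x \<noteq> y\<close> \<open>x \<in> S\<close> \<open>y \<in> S\<close> that unfolding strictly_concave_on_def by blast
  from this[of "1/2"] have "f m > (1 - 1/2) * f x + 1/2 * f y"
    unfolding m_def by simp
  moreover have "f x = f y"
    using max_x[OF \<open>y \<in> S\<close>] max_y[OF \<open>x \<in> S\<close>] by simp
  ultimately show False
    using max_x[OF \<open>m \<in> S\<close>] by simp
qed

lemma legendre_argmax_eqI:
  assumes "strictly_concave_on UNIV E" and "\<And>w. E w - w \<bullet> \<rho> \<le> E v - v \<bullet> \<rho>"
  shows "(THE v. \<forall>w. E w - w \<bullet> \<rho> \<le> E v - v \<bullet> \<rho>) = v"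
proof (rule the_equality)
  show "\<forall>w. E w - w \<bullet> \<rho> \<le> E v - v \<bullet> \<rho>"
    using assms(2) by blast
  fix u
  assume "\<forall>w. E w - w \<bullet> \<rho> \<le> E u - u \<bullet> \<rho>"
  then show "u = v"
    using assms(2) by (intro strictly_concave_on_maximizer_unique[OF strictly_concave_on_diff_inner[OF assms(1)]]) auto
qed

lemma SUP_ereal_less_infinity_iff: "(SUP x\<in>A. ereal (g x)) < \<infinity> \<longleftrightarrow> bdd_above (g ` A)"
proof
  assume "(SUP x\<in>A. ereal (g x)) < \<infinity>"
  then obtain n :: nat where n: "(SUP x\<in>A. ereal (g x)) < ereal (real n)"
    using less_PInf_Ex_of_nat by auto
  have "g x \<le> real n" if "x \<in> A" for x
    using order.strict_trans1[OF SUP_upper[OF that] n] by simp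
  then show "bdd_above (g ` A)"
    by (intro bdd_aboveI2)
next
  assume "bdd_above (g ` A)"
  then obtain B where "g x \<le> B" if "x \<in> A" for x
    by (auto simp: bdd_above_def)
  then have "(SUP x\<in>A. ereal (g x)) \<le> ereal B"
    by (intro SUP_least) simp
  then show "(SUP x\<in>A. ereal (g x)) < \<infinity>"
    using order.strict_trans1 by fastforce
qed

lemma linear_decay_near_interior_point:
  fixes E :: "'a::euclidean_space \<Rightarrow> real"
  assumes "\<rho>0 \<in> interior {\<rho>. bdd_above (range (\<lambda>v. E v - v \<bullet> \<rho>))}"
  obtains \<delta> M where "\<delta> > 0" "\<And>v \<rho>. E v - v \<bullet> \<rho> \<le> M + (norm (\<rho> - \<rho>0) - \<delta>) * norm v"
proof -
  obtain \<epsilon> where "\<epsilon> > 0" and ball: "ball \<rho>0 \<epsilon> \<subseteq> {\<rho>. bdd_above (range (\<lambda>v. E v - v \<bullet> \<rho>))}"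
    using assms unfolding mem_interior by blast
  define d where "d = \<epsilon> / 2"
  have "d > 0"
    using \<open>\<epsilon> > 0\<close> by (simp add: d_def)
  \<comment> \<open>Testing \<open>\<rho>0 \<plusminus> d b\<close> for a basis vector \<open>b\<close> bounds \<open>E v - v \<bullet> \<rho>0 + d |v \<bullet> b|\<close>;
    averaging over the basis and \<open>|v| \<le> \<Sum>\<^sub>b |v \<bullet> b|\<close> gives the decay rate \<open>d / DIM('a)\<close>.\<close>
  have "\<forall>b\<in>Basis. \<exists>B. \<forall>v. E v - v \<bullet> \<rho>0 + d * \<bar>v \<bullet> b\<bar> \<le> B"
  proof
    fix b :: 'a
    assume "b \<in> Basis"
    have bdd: "bdd_above (range (\<lambda>v. E v - v \<bullet> (\<rho>0 + (s * d) *\<^sub>R b)))" if "\<bar>s\<bar> = 1" for s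
    proof -
      have "\<rho>0 + (s * d) *\<^sub>R b \<in> ball \<rho>0 \<epsilon>"
        using \<open>b \<in> Basis\<close> \<open>\<epsilon> > 0\<close> that by (simp add: dist_norm abs_mult d_def)
      then show ?thesis
        using ball by (simp add: subset_eq)
    qed
    obtain B1 where B1: "\<And>v. E v - v \<bullet> (\<rho>0 + (1 * d) *\<^sub>R b) \<le> B1"
      using bdd[of 1] unfolding bdd_above_def by auto
    obtain B2 where B2: "\<And>v. E v - v \<bullet> (\<rho>0 + (-1 * d) *\<^sub>R b) \<le> B2"
      using bdd[of "-1"] unfolding bdd_above_def by auto
    have "E v - v \<bullet> \<rho>0 + d * \<bar>v \<bullet> b\<bar> \<le> max B1 B2" for v
      using B1[of v] B2[of v] by (simp add: inner_add_right inner_diff_right abs_if le_max_iff_disj)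
    then show "\<exists>B. \<forall>v. E v - v \<bullet> \<rho>0 + d * \<bar>v \<bullet> b\<bar> \<le> B"
      by blast
  qed
  then obtain B where B: "\<And>b v. b \<in> Basis \<Longrightarrow> E v - v \<bullet> \<rho>0 + d * \<bar>v \<bullet> b\<bar> \<le> B b"
    by (auto dest!: bchoice)
  define n where "n = real DIM('a)"
  have "n > 0"
    by (simp add: n_def)
  have "E v - v \<bullet> \<rho> \<le> sum B Basis / n + (norm (\<rho> - \<rho>0) - d / n) * norm v" for v \<rho>
  proof -
    have "n * (E v - v \<bullet> \<rho>0) + d * (\<Sum>b\<in>Basis. \<bar>v \<bullet> b\<bar>) \<le> sum B Basis"
      using sum_mono[of Basis "\<lambda>b. E v - v \<bullet> \<rho>0 + d * \<bar>v \<bullet> b\<bar>" B] B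
      by (simp add: n_def sum.distrib sum_distrib_left)
    moreover have "d * norm v \<le> d * (\<Sum>b\<in>Basis. \<bar>v \<bullet> b\<bar>)"
      using norm_le_l1[of v] \<open>d > 0\<close> by (simp add: mult_left_mono)
    ultimately have "n * (E v - v \<bullet> \<rho>0) \<le> sum B Basis - d * norm v"
      by linarith
    then have "E v - v \<bullet> \<rho>0 \<le> sum B Basis / n - d / n * norm v"
      using \<open>n > 0\<close> by (simp add: field_simps)
    moreover have "v \<bullet> (\<rho>0 - \<rho>) \<le> norm (\<rho> - \<rho>0) * norm v"
      using norm_cauchy_schwarz[of v "\<rho>0 - \<rho>"] by (simp add: norm_minus_commute mult.commute)
    ultimately show ?thesis
      by (simp add: inner_diff_right algebra_simps)
  qed
  then show ?thesis
    using that[of "d / n" "sum B Basis / n"] \<open>n > 0\<close> \<open>d > 0\<close> by simp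
qed

lemma uniformly_coercive_near_interior_point:
  fixes E :: "'a::euclidean_space \<Rightarrow> real"
  assumes "\<rho>0 \<in> interior {\<rho>. bdd_above (range (\<lambda>v. E v - v \<bullet> \<rho>))}"
  obtains r R where "r > 0" "\<And>\<rho> w. \<rho> \<in> ball \<rho>0 r \<Longrightarrow> R < norm w \<Longrightarrow> E w - w \<bullet> \<rho> < E 0"
proof -
  obtain \<delta> M where "\<delta> > 0" and decay: "\<And>v \<rho>. E v - v \<bullet> \<rho> \<le> M + (norm (\<rho> - \<rho>0) - \<delta>) * norm v"
    using linear_decay_near_interior_point[OF assms] by blast
  define R where "R = 2 * (M - E 0) / \<delta>"
  have "E w - w \<bullet> \<rho> < E 0" if "\<rho> \<in> ball \<rho>0 (\<delta> / 2)" "R < norm w" for \<rho> w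
  proof -
    have "norm (\<rho> - \<rho>0) - \<delta> \<le> - \<delta> / 2"
      using that(1) by (simp add: dist_norm norm_minus_commute)
    then have "(norm (\<rho> - \<rho>0) - \<delta>) * norm w \<le> - \<delta> / 2 * norm w"
      by (rule mult_right_mono) simp
    also have "\<dots> < - \<delta> / 2 * R"
      using \<open>\<delta> > 0\<close> that(2) by simp
    also have "\<dots> = E 0 - M"
      using \<open>\<delta> > 0\<close> by (simp add: R_def field_simps)
    finally show ?thesis
      using decay[of w \<rho>] by simp
  qed
  then show ?thesis
    using that[of "\<delta> / 2" R] \<open>\<delta> > 0\<close> by simp
qed

lemma continuous_attains_sup_coercive:
  fixes g :: "'a::euclidean_space \<Rightarrow> real"
  assumes "continuous_on UNIV g" and coercive: "\<And>w. R < norm w \<Longrightarrow> g w < g 0"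
  obtains v where "norm v \<le> R" "\<And>w. g w \<le> g v"
proof -
  have "0 \<le> R"
  proof (rule ccontr)
    assume "\<not> 0 \<le> R"
    then show False
      using coercive[of 0] by simp
  qed
  then have "\<exists>v\<in>cball 0 R. \<forall>w\<in>cball 0 R. g w \<le> g v"
    by (intro continuous_attains_sup compact_cball continuous_on_subset[OF assms(1)]) auto
  then obtain v where "norm v \<le> R" and v: "\<And>w. norm w \<le> R \<Longrightarrow> g w \<le> g v"
    by auto
  moreover have "g w \<le> g v" if "R < norm w" for w
    using coercive[OF that] v[of 0] \<open>0 \<le> R\<close> by simp
  ultimately show ?thesis
    using that by (meson not_le)
qed

lemma continuous_on_legendre_argmax:
  fixes E :: "'a::euclidean_space \<Rightarrow> real"
  assumes "strictly_concave_on UNIV E"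
  shows "continuous_on (interior {\<rho>. bdd_above (range (\<lambda>v. E v - v \<bullet> \<rho>))})
    (\<lambda>\<rho>. THE v. \<forall>w. E w - w \<bullet> \<rho> \<le> E v - v \<bullet> \<rho>)"
    (is "continuous_on ?D ?argmax")
proof (rule continuous_at_imp_continuous_on, rule ballI)
  fix \<rho>0
  assume "\<rho>0 \<in> ?D"
  obtain r R where "r > 0"
    and coercive: "\<And>\<rho> w. \<rho> \<in> ball \<rho>0 r \<Longrightarrow> R < norm w \<Longrightarrow> E w - w \<bullet> \<rho> < E 0"
    using uniformly_coercive_near_interior_point[OF \<open>\<rho>0 \<in> ?D\<close>] by blast
  have "continuous_on UNIV E"
    using assms by (rule strictly_concave_on_imp_continuous_on[OF open_UNIV])
  have argmax: "norm (?argmax \<rho>) \<le> R \<and> (\<forall>w. E w - w \<bullet> \<rho> \<le> E (?argmax \<rho>) - ?argmax \<rho> \<bullet> \<rho>)"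
    if \<rho>: "\<rho> \<in> ball \<rho>0 r" for \<rho>
  proof -
    have "continuous_on UNIV (\<lambda>v. E v - v \<bullet> \<rho>)"
      using \<open>continuous_on UNIV E\<close> by (intro continuous_intros)
    moreover have "E w - w \<bullet> \<rho> < E 0 - 0 \<bullet> \<rho>" if "R < norm w" for w
      using coercive[OF \<rho> that] by simp
    ultimately obtain v where v: "norm v \<le> R" "\<And>w. E w - w \<bullet> \<rho> \<le> E v - v \<bullet> \<rho>"
      using continuous_attains_sup_coercive[of "\<lambda>v. E v - v \<bullet> \<rho>" R] by blast
    have "?argmax \<rho> = v"
      using legendre_argmax_eqI[OF assms v(2)] .
    then show ?thesis
      using v by simp
  qed
  have "continuous_on (ball \<rho>0 r) ?argmax"
  proof (rule continuous_on_closed_graph_in_compact[where K = "cball 0 R"])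
    define G where "G = {(\<rho>, v). \<forall>w. E w - w \<bullet> \<rho> \<le> E v - v \<bullet> \<rho>}"
    have "continuous_on UNIV (\<lambda>z :: 'a \<times> 'a. E (snd z))"
      by (rule continuous_on_compose2[OF \<open>continuous_on UNIV E\<close> continuous_on_snd]) auto
    then show "closed G"
      unfolding G_def case_prod_beta'
      by (intro closed_Collect_all closed_Collect_le continuous_intros)
    show "?argmax ` ball \<rho>0 r \<subseteq> cball 0 R"
      using argmax by auto
    show "(\<rho>, v) \<in> G \<longleftrightarrow> v = ?argmax \<rho>" if "\<rho> \<in> ball \<rho>0 r" for \<rho> v
      using argmax[OF that] legendre_argmax_eqI[OF assms, of \<rho> v] unfolding G_def by auto
  qed simp
  then show "isCont ?argmax \<rho>0"
    using \<open>r > 0\<close> by (simp add: continuous_on_interior)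
qed

theorem mainTheorem2:
  fixes H0 :: "complex^'d^'d" and H1 :: "'m::finite \<Rightarrow> complex^'d^'d"
  assumes "hermitian H0"
    and "\<And>k. hermitian (H1 k)"
    and "strictly_concave_on UNIV (E0 H0 H1)"
    and "\<And>v. nondegenerate_eigenvalue (Ham H0 H1 v) (complex_of_real (E0 H0 H1 v))"
  shows "continuous_on (Fdom H0 H1) (P0 H0 H1)"
proof -
  have "continuous_on UNIV (E0 H0 H1)"
    using assms(3) by (rule strictly_concave_on_imp_continuous_on[OF open_UNIV])
  moreover have "continuous_on UNIV (Ham H0 H1)"
    unfolding Ham_def by (intro continuous_intros)
  ultimately have projector: "continuous_on UNIV
      (\<lambda>v. orth_projector (eigenspace (Ham H0 H1 v) (complex_of_real (E0 H0 H1 v))))"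
    using assms(4) by (intro continuous_on_eigenprojector continuous_intros)
  have "Fdom H0 H1 = interior {\<rho>. bdd_above (range (\<lambda>v. E0 H0 H1 v - v \<bullet> \<rho>))}"
    unfolding Fdom_def Ffun_def SUP_ereal_less_infinity_iff ..
  then have "continuous_on (Fdom H0 H1) (fpot H0 H1)"
    unfolding fpot_def using continuous_on_legendre_argmax[OF assms(3)] by simp
  then show ?thesis
    unfolding P0_def by (rule continuous_on_compose2[OF projector]) auto
qed

end
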